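(* Consider the system $x_{k+1}=F(x_k,u_k,w_k,v_k)$, $y_k=H(x_k,u_k,w_k,v_k)$ with $x_k\in\mathbb{X}$, $u_k\in\mathbb{U}$, $w_k\in\mathbb{W}$, $v_k\in\mathbb{V}$, $y_k\in\mathbb{Y}$. For pairs of trajectories $(\boldsymbol{x},\boldsymbol{u},\boldsymbol{w},\boldsymbol{v},\boldsymbol{y})$, $(\widetilde{\boldsymbol{x}},\boldsymbol{u},\widetilde{\boldsymbol{w}},\widetilde{\boldsymbol{v}},\widetilde{\boldsymbol{y}})$ write $\delta x_k=x_k-\widetilde{x}_k$, $\delta v_k=v_k-\widetilde{v}_k$, $\delta y_k=y_k-\widetilde{y}_k$. There exist $\gamma_0\in\mathcal{KL}$ and $\gamma_v,\gamma_y\in\mathcal{K}$ such that $$\|\delta x_k\|\le\max\big(\gamma_0(\|\delta x_0\|,k),\ \gamma_v(\|\delta\boldsymbol{v}\|_{[0,k-1]}),\ \gamma_y(\|\delta\boldsymbol{y}\|_{[0,k-1]})\big)$$ for all $k\ge0$ and all such pairs of trajectories, if and only if there exist $\overline{\gamma}_0,\overline{\gamma}_v,\overline{\gamma}_y\in\mathcal{KL}$ such that $$\|\delta x_k\|\le\max\Big(\max_{j\in\{0,\dots,k-1\}}\overline{\gamma}_v(\|\delta v_j\|,k-j-1),\ \overline{\gamma}_0(\|\delta x_0\|,k),\ \max_{j\in\{0,\dots,k-1\}}\overline{\gamma}_y(\|\delta y_j\|,k-j-1)\Big)$$ for all $k\ge0$ and all such pairs of trajectories.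
   Context: $\|\boldsymbol{x}\|_{[a,b]}:=\max_{i\in\{a,\dots,b\}}\|x_i\|$. $\mathcal{K}$ and $\mathcal{KL}$ are the usual comparison function classes: $\alpha\in\mathcal{K}$ if continuous, strictly increasing, $\alpha(0)=0$; $\beta\in\mathcal{KL}$ if $\beta(\cdot,k)\in\mathcal{K}$ for each $k$ and $\beta(r,\cdot)$ is non-increasing with limit $0$. A trajectory is a sequence satisfying the system equations for all $k$. *)

theory Defs
  imports "HOL-Analysis.Analysis"
begin

definition class_K :: "(real \<Rightarrow> real) \<Rightarrow> bool" where
  "class_K \<alpha> \<longleftrightarrow> continuous_on {0..} \<alpha> \<and> strict_mono_on {0..} \<alpha> \<and> \<alpha> 0 = 0"

definition class_KL :: "(real \<Rightarrow> nat \<Rightarrow> real) \<Rightarrow> bool" where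
  "class_KL \<beta> \<longleftrightarrow> (\<forall>k. class_K (\<lambda>r. \<beta> r k)) \<and>
     (\<forall>r\<ge>0. antimono (\<lambda>k. \<beta> r k) \<and> (\<lambda>k. \<beta> r k) \<longlonglongrightarrow> 0)"

definition trajectory ::
  "('x \<Rightarrow> 'u \<Rightarrow> 'w \<Rightarrow> 'v \<Rightarrow> 'x) \<Rightarrow> ('x \<Rightarrow> 'u \<Rightarrow> 'w \<Rightarrow> 'v \<Rightarrow> 'y) \<Rightarrow>
   'x set \<Rightarrow> 'u set \<Rightarrow> 'w set \<Rightarrow> 'v set \<Rightarrow> 'y set \<Rightarrow>
   (nat \<Rightarrow> 'x) \<Rightarrow> (nat \<Rightarrow> 'u) \<Rightarrow> (nat \<Rightarrow> 'w) \<Rightarrow> (nat \<Rightarrow> 'v) \<Rightarrow> (nat \<Rightarrow> 'y) \<Rightarrow> bool" where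
  "trajectory F H XX UU WW VV YY x u w v y \<longleftrightarrow>
     (\<forall>k. x k \<in> XX \<and> u k \<in> UU \<and> w k \<in> WW \<and> v k \<in> VV \<and> y k \<in> YY \<and>
          x (Suc k) = F (x k) (u k) (w k) (v k) \<and> y k = H (x k) (u k) (w k) (v k))"

definition seg_norm :: "(nat \<Rightarrow> 'a::real_normed_vector) \<Rightarrow> nat \<Rightarrow> real" where
  "seg_norm f k = Max (insert 0 ((\<lambda>i. norm (f i)) ` {..<k}))"

definition fading_max :: "(real \<Rightarrow> nat \<Rightarrow> real) \<Rightarrow> (nat \<Rightarrow> 'a::real_normed_vector) \<Rightarrow> nat \<Rightarrow> real" where
  "fading_max g f k = Max (insert 0 ((\<lambda>j. g (norm (f j)) (k - j - 1)) ` {..<k}))"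

end

theory Submission
  imports Defs
begin

text \<open>Shifting both trajectories in time preserves the trajectory property, so the
  max-form estimate can be restarted at any time \<open>j\<close>.  With \<open>\<beta> = \<gamma>0\<close> and a time
  \<open>T(b)\<close> such that \<open>\<beta> (2 * b) (T b) \<le> b\<close>, the difference at time \<open>k\<close> is at most \<open>b\<close> as soon as
  it was at most \<open>2 * b\<close> at time \<open>k - T b\<close> and the inputs in between were at most \<open>b\<close>.
  Iterating with targets \<open>b, 2 b, 4 b, \<dots>\<close> shows that an input is harmless for the target \<open>b\<close>
  once it lies below a tolerance that grows without bound with its age, uniformly for \<open>b\<close>
  bounded away from \<open>0\<close>.  Inverting the tolerance gives a fading gain, and averaging it over
  \<open>[s, 2 s]\<close> turns it into a class KL function.  The converse direction is immediate, as every
  term of the fading maximum is at most \<open>g (seg_norm \<delta> k) 0\<close>.\<close>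

lemma class_K_mono: "class_K \<alpha> \<Longrightarrow> 0 \<le> r \<Longrightarrow> r \<le> r' \<Longrightarrow> \<alpha> r \<le> \<alpha> r'"
  unfolding class_K_def by (auto intro: strict_mono_on_leD)

lemma class_K_nonneg: "class_K \<alpha> \<Longrightarrow> 0 \<le> r \<Longrightarrow> 0 \<le> \<alpha> r"
  using class_K_mono[of \<alpha> 0 r] by (simp add: class_K_def)

lemma class_K_id: "class_K (\<lambda>r. r)"
  unfolding class_K_def by (auto intro: strict_mono_onI)

lemma class_K_compose:
  assumes "class_K \<alpha>" and "class_K \<gamma>"
  shows "class_K (\<lambda>r. \<alpha> (\<gamma> r))"
proof -
  have "\<gamma> ` {0..} \<subseteq> {0..}"
    using class_K_nonneg[OF \<open>class_K \<gamma>\<close>] by auto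
  then show ?thesis
    using assms unfolding class_K_def
    by (auto intro!: continuous_on_compose2[of "{0..}" \<alpha>] strict_mono_onI
             dest!: strict_mono_onD[of "{0..}" \<gamma>] elim!: strict_mono_onD)
qed

lemma class_KL_K: "class_KL \<beta> \<Longrightarrow> class_K (\<lambda>r. \<beta> r t)"
  unfolding class_KL_def by auto

lemma class_KL_mono: "class_KL \<beta> \<Longrightarrow> 0 \<le> r \<Longrightarrow> r \<le> r' \<Longrightarrow> \<beta> r t \<le> \<beta> r' t"
  using class_K_mono[OF class_KL_K] by blast

lemma class_KL_nonneg: "class_KL \<beta> \<Longrightarrow> 0 \<le> r \<Longrightarrow> 0 \<le> \<beta> r t"
  using class_K_nonneg[OF class_KL_K] by blast

lemma class_KL_zero: "class_KL \<beta> \<Longrightarrow> \<beta> 0 t = 0"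
  using class_KL_K unfolding class_K_def by blast

lemma class_KL_antimono: "class_KL \<beta> \<Longrightarrow> 0 \<le> r \<Longrightarrow> t \<le> t' \<Longrightarrow> \<beta> r t' \<le> \<beta> r t"
  unfolding class_KL_def by (auto simp: antimono_def)

lemma class_KL_tendsto_0: "class_KL \<beta> \<Longrightarrow> 0 \<le> r \<Longrightarrow> (\<lambda>t. \<beta> r t) \<longlonglongrightarrow> 0"
  unfolding class_KL_def by auto

lemma class_KL_compose_K:
  assumes "class_KL \<beta>" and "class_K \<gamma>"
  shows "class_KL (\<lambda>r t. \<beta> (\<gamma> r) t)"
  using assms class_K_compose[OF class_KL_K] class_K_nonneg[OF \<open>class_K \<gamma>\<close>]
  unfolding class_KL_def by simp

lemma class_KL_max:
  "class_KL \<beta> \<Longrightarrow> 0 \<le> a \<Longrightarrow> 0 \<le> b \<Longrightarrow> \<beta> (max a b) t = max (\<beta> a t) (\<beta> b t)"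
  using class_KL_mono[of \<beta> a b t] class_KL_mono[of \<beta> b a t] by (auto simp: max_def)

definition running_max :: "(nat \<Rightarrow> real) \<Rightarrow> nat \<Rightarrow> real" where
  "running_max f k = Max (insert 0 (f ` {..<k}))"

lemma running_max_nonneg: "0 \<le> running_max f k"
  unfolding running_max_def by (rule Max_ge) auto

lemma running_max_ge: "i < k \<Longrightarrow> f i \<le> running_max f k"
  unfolding running_max_def by (rule Max_ge) auto

lemma running_max_least: "0 \<le> c \<Longrightarrow> (\<And>i. i < k \<Longrightarrow> f i \<le> c) \<Longrightarrow> running_max f k \<le> c"
  unfolding running_max_def by auto

lemma running_max_mono: "(\<And>i. i < k \<Longrightarrow> f i \<le> g i) \<Longrightarrow> running_max f k \<le> running_max g k"
  by (rule running_max_least[OF running_max_nonneg]) (auto intro: order_trans[OF _ running_max_ge])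

lemma running_max_max_le:
  "running_max (\<lambda>i. max (f i) (g i)) k \<le> max (running_max f k) (running_max g k)"
proof (rule running_max_least)
  show "0 \<le> max (running_max f k) (running_max g k)"
    by (simp add: running_max_nonneg le_max_iff_disj)
  show "max (f i) (g i) \<le> max (running_max f k) (running_max g k)" if "i < k" for i
    using that by (intro max.mono running_max_ge)
qed

lemma class_K_running_max:
  assumes "class_K \<alpha>" and "\<And>i. 0 \<le> f i"
  shows "\<alpha> (running_max f k) \<le> running_max (\<lambda>i. \<alpha> (f i)) k"
proof -
  have "running_max f k \<in> insert 0 (f ` {..<k})"
    unfolding running_max_def by (rule Max_in) auto
  then show ?thesis
    using assms running_max_nonneg running_max_ge[of _ k "\<lambda>i. \<alpha> (f i)"]
    by (auto simp: class_K_def)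
qed

lemma seg_norm_eq_running_max: "seg_norm f k = running_max (\<lambda>i. norm (f i)) k"
  unfolding seg_norm_def running_max_def ..

lemma fading_max_eq_running_max: "fading_max g f k = running_max (\<lambda>i. g (norm (f i)) (k - i - 1)) k"
  unfolding fading_max_def running_max_def ..

lemma class_K_seg_norm_le:
  assumes "class_K \<alpha>" and "\<And>i. \<alpha> (norm (f i)) \<le> e i"
  shows "\<alpha> (seg_norm f k) \<le> running_max e k"
  unfolding seg_norm_eq_running_max
  using order_trans[OF class_K_running_max[OF assms(1)] running_max_mono] assms(2) by simp

text \<open>The mean of \<open>f\<close> over \<open>[s, 2 s]\<close>, substituted to \<open>[1, 2]\<close> so that it is also defined,
  as \<open>f 0\<close>, at \<open>s = 0\<close>.\<close>
definition dyadic_mean :: "(real \<Rightarrow> real) \<Rightarrow> real \<Rightarrow> real" where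
  "dyadic_mean f s = integral {1..2} (\<lambda>u. f (s * u))"

lemma integrable_dyadic_rescaled:
  fixes f :: "real \<Rightarrow> real"
  assumes "mono_on {0..} f" and "0 \<le> s"
  shows "(\<lambda>u. f (s * u)) integrable_on {1..2}"
proof (rule integrable_on_mono_on, rule mono_onI)
  fix u u' :: real
  assume "u \<in> {1..2}" "u' \<in> {1..2}" "u \<le> u'"
  then show "f (s * u) \<le> f (s * u')"
    using assms by (intro mono_onD[OF assms(1)]) (auto intro: mult_left_mono)
qed

lemma dyadic_mean_mono_fun:
  fixes f g :: "real \<Rightarrow> real"
  assumes "mono_on {0..} f" "mono_on {0..} g" "\<And>r. 0 \<le> r \<Longrightarrow> f r \<le> g r" "0 \<le> s"
  shows "dyadic_mean f s \<le> dyadic_mean g s"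
  unfolding dyadic_mean_def using assms
  by (intro integral_le integrable_dyadic_rescaled) auto

lemma dyadic_mean_mono:
  fixes f :: "real \<Rightarrow> real"
  assumes "mono_on {0..} f"
  shows "mono_on {0..} (dyadic_mean f)"
  unfolding dyadic_mean_def using assms
  by (intro mono_onI integral_le integrable_dyadic_rescaled)
     (auto simp: mono_on_def intro!: mult_right_mono)

lemma dyadic_mean_bounds:
  fixes f :: "real \<Rightarrow> real"
  assumes "mono_on {0..} f" and "0 \<le> s"
  shows "f s \<le> dyadic_mean f s" and "dyadic_mean f s \<le> f (2 * s)"
proof -
  have between: "f s \<le> f (s * u)" "f (s * u) \<le> f (2 * s)" if "u \<in> {1..2}" for u
    using that assms mult_left_mono[of 1 u s] mult_left_mono[of u 2 s]
    by (auto intro!: mono_onD[OF assms(1)])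
  have "integral {1..2} (\<lambda>u::real. f s) \<le> dyadic_mean f s"
    unfolding dyadic_mean_def
    by (rule integral_le) (use assms between in \<open>auto intro: integrable_dyadic_rescaled\<close>)
  moreover have "dyadic_mean f s \<le> integral {1..2} (\<lambda>u::real. f (2 * s))"
    unfolding dyadic_mean_def
    by (rule integral_le) (use assms between in \<open>auto intro: integrable_dyadic_rescaled\<close>)
  ultimately show "f s \<le> dyadic_mean f s" and "dyadic_mean f s \<le> f (2 * s)"
    by simp_all
qed

lemma dyadic_mean_eq_integral:
  fixes f :: "real \<Rightarrow> real"
  assumes "mono_on {0..} f" and "0 < s"
  shows "dyadic_mean f s = (integral {0..2 * s} f - integral {0..s} f) / s"
proof -
  have int: "f integrable_on {a..b}" if "0 \<le> a" for a b
    by (rule integrable_on_mono_on) (use assms that in \<open>auto simp: mono_on_def\<close>)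
  have "(f has_integral integral {s..2 * s} f) (cbox s (2 * s))"
    using int[of s "2 * s"] assms by (simp add: integrable_integral)
  from has_integral_affinity'[OF this \<open>0 < s\<close>, of 0]
  have "((\<lambda>u. f (s * u)) has_integral integral {s..2 * s} f / s) {1..2}"
    using assms by (simp add: field_simps)
  moreover have "integral {0..s} f + integral {s..2 * s} f = integral {0..2 * s} f"
    using Henstock_Kurzweil_Integration.integral_combine[of 0 s "2 * s" f] int[of 0 "2 * s"] assms
    by simp
  ultimately show ?thesis
    unfolding dyadic_mean_def by (simp add: integral_unique algebra_simps)
qed

lemma continuous_on_dyadic_mean:
  fixes f :: "real \<Rightarrow> real"
  assumes mono: "mono_on {0..} f" and cont0: "continuous (at 0 within {0..}) f"
  shows "continuous_on {0..} (dyadic_mean f)"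
proof -
  have "continuous_on {0<..<c} (dyadic_mean f)" for c
  proof -
    have F: "continuous_on {0..2 * c} (\<lambda>x. integral {0..x} f)"
      by (intro indefinite_integral_continuous_1 integrable_on_mono_on)
         (use mono in \<open>auto simp: mono_on_def\<close>)
    have "continuous_on {0<..<c} (\<lambda>s. (integral {0..2 * s} f - integral {0..s} f) / s)"
      by (intro continuous_intros continuous_on_compose2[OF F] continuous_on_subset[OF F]) auto
    then show ?thesis
      by (rule continuous_on_cong[THEN iffD1, rotated -1]) (auto simp: dyadic_mean_eq_integral[OF mono])
  qed
  then have "continuous_on (\<Union>c. {0<..<c}) (dyadic_mean f)"
    by (intro continuous_on_open_UN) auto
  moreover have "(\<Union>c. {0<..<c}) = ({0<..} :: real set)"
    by (auto intro: gt_ex)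
  ultimately have pos: "isCont (dyadic_mean f) s" if "0 < s" for s
    using that continuous_on_eq_continuous_at[of "{0<..}" "dyadic_mean f"] by auto
  have double: "filterlim (\<lambda>s::real. 2 * s) (at 0 within {0..}) (at 0 within {0..})"
    unfolding filterlim_at by (auto simp: eventually_at_filter intro!: tendsto_eq_intros)
  have "(dyadic_mean f \<longlongrightarrow> f 0) (at 0 within {0..})"
  proof (rule tendsto_sandwich)
    show "\<forall>\<^sub>F s in at 0 within {0..}. f s \<le> dyadic_mean f s"
      "\<forall>\<^sub>F s in at 0 within {0..}. dyadic_mean f s \<le> f (2 * s)"
      using dyadic_mean_bounds[OF mono] by (auto simp: eventually_at_filter)
    show "(f \<longlongrightarrow> f 0) (at 0 within {0..})"
      using cont0 by (simp add: continuous_within)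
    then show "((\<lambda>s. f (2 * s)) \<longlongrightarrow> f 0) (at 0 within {0..})"
      using double by (rule filterlim_compose)
  qed
  then have "continuous (at 0 within {0..}) (dyadic_mean f)"
    by (simp add: continuous_within dyadic_mean_def)
  with pos show ?thesis
    unfolding continuous_on_eq_continuous_within
    by (metis atLeast_iff continuous_at_imp_continuous_within order_less_le)
qed

lemma continuous_at_0_if_class_K_bounded:
  fixes f :: "real \<Rightarrow> real"
  assumes "class_K \<alpha>" and "\<And>s. 0 \<le> s \<Longrightarrow> 0 \<le> f s" and "\<And>s. 0 \<le> s \<Longrightarrow> f s \<le> \<alpha> s"
  shows "continuous (at 0 within {0..}) f"
proof -
  have "f 0 = 0"
    using assms by (fastforce simp: class_K_def)
  have "(\<alpha> \<longlongrightarrow> 0) (at 0 within {0..})"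
    using \<open>class_K \<alpha>\<close> unfolding class_K_def continuous_on_def by (metis atLeast_iff order_refl)
  then have "(f \<longlongrightarrow> 0) (at 0 within {0..})"
    by (rule tendsto_sandwich[rotated 2, OF tendsto_const])
       (use assms in \<open>auto simp: eventually_at_filter\<close>)
  then show ?thesis
    by (simp add: continuous_within \<open>f 0 = 0\<close>)
qed

text \<open>The mean makes the majorant continuous, the term \<open>s / (t + 1)\<close> strictly increasing.\<close>
definition KL_majorant :: "(real \<Rightarrow> nat \<Rightarrow> real) \<Rightarrow> real \<Rightarrow> nat \<Rightarrow> real" where
  "KL_majorant \<psi> s t = dyadic_mean (\<lambda>r. \<psi> r t) s + s / (real t + 1)"

lemma le_KL_majorant:
  fixes \<psi> :: "real \<Rightarrow> nat \<Rightarrow> real"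
  assumes "mono_on {0..} (\<lambda>s. \<psi> s t)" and "0 \<le> s"
  shows "\<psi> s t \<le> KL_majorant \<psi> s t"
proof -
  have "0 \<le> s / (real t + 1)"
    using assms by simp
  then show ?thesis
    using dyadic_mean_bounds(1)[OF assms] by (simp add: KL_majorant_def)
qed

lemma class_KL_KL_majorant:
  fixes \<psi> :: "real \<Rightarrow> nat \<Rightarrow> real"
  assumes "class_K \<alpha>"
    and nonneg: "\<And>s t. 0 \<le> s \<Longrightarrow> 0 \<le> \<psi> s t"
    and mono: "\<And>t. mono_on {0..} (\<lambda>s. \<psi> s t)"
    and antimono: "\<And>s t t'. 0 \<le> s \<Longrightarrow> t \<le> t' \<Longrightarrow> \<psi> s t' \<le> \<psi> s t"
    and tendsto: "\<And>s. 0 \<le> s \<Longrightarrow> (\<lambda>t. \<psi> s t) \<longlonglongrightarrow> 0"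
    and bound: "\<And>s t. 0 \<le> s \<Longrightarrow> \<psi> s t \<le> \<alpha> s"
  shows "class_KL (KL_majorant \<psi>)"
  unfolding class_KL_def class_K_def
proof (intro conjI allI impI)
  fix t
  have cont0: "continuous (at 0 within {0..}) (\<lambda>s. \<psi> s t)"
    using \<open>class_K \<alpha>\<close> nonneg bound by (rule continuous_at_0_if_class_K_bounded)
  then show "continuous_on {0..} (\<lambda>s. KL_majorant \<psi> s t)"
    unfolding KL_majorant_def by (intro continuous_intros continuous_on_dyadic_mean mono) auto
  show "strict_mono_on {0..} (\<lambda>s. KL_majorant \<psi> s t)"
    unfolding KL_majorant_def
    by (rule strict_mono_onI, rule add_le_less_mono)
       (auto intro: mono_onD[OF dyadic_mean_mono[OF mono]] divide_strict_right_mono)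
  show "KL_majorant \<psi> 0 t = 0"
    using nonneg[of 0 t] bound[of 0 t] \<open>class_K \<alpha>\<close>
    by (simp add: KL_majorant_def dyadic_mean_def class_K_def)
next
  fix s :: real
  assume "0 \<le> s"
  show "antimono (\<lambda>t. KL_majorant \<psi> s t)"
  proof (rule antimonoI)
    fix t t' :: nat
    assume "t \<le> t'"
    have "dyadic_mean (\<lambda>r. \<psi> r t') s \<le> dyadic_mean (\<lambda>r. \<psi> r t) s"
      using \<open>0 \<le> s\<close> \<open>t \<le> t'\<close> by (intro dyadic_mean_mono_fun mono antimono)
    moreover have "s / (real t' + 1) \<le> s / (real t + 1)"
      using \<open>0 \<le> s\<close> \<open>t \<le> t'\<close> by (intro divide_left_mono) auto
    ultimately show "KL_majorant \<psi> s t' \<le> KL_majorant \<psi> s t"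
      by (simp add: KL_majorant_def)
  qed
  have "(\<lambda>t. dyadic_mean (\<lambda>r. \<psi> r t) s) \<longlonglongrightarrow> 0"
    using \<open>0 \<le> s\<close> dyadic_mean_bounds[OF mono \<open>0 \<le> s\<close>]
    by (intro tendsto_sandwich[OF _ _ tendsto_const tendsto[of "2 * s"]] always_eventually allI)
       (auto intro: order_trans[OF nonneg])
  moreover have "(\<lambda>t. s / (real t + 1)) \<longlonglongrightarrow> 0"
    using LIMSEQ_Suc[OF lim_const_over_n[of s]] by (simp add: add.commute)
  ultimately show "(\<lambda>t. KL_majorant \<psi> s t) \<longlonglongrightarrow> 0"
    unfolding KL_majorant_def using tendsto_add by fastforce
qed

context
  fixes \<beta> :: "real \<Rightarrow> nat \<Rightarrow> real"
  assumes KL: "class_KL \<beta>"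
begin

definition settle_time :: "real \<Rightarrow> nat" where
  "settle_time b = Suc (LEAST t. \<beta> (2 * b) t \<le> b)"

text \<open>The input level admissible at age \<open>t\<close> for the final bound \<open>b\<close>: the bound doubles with
  every settling period further back.\<close>
function tolerance :: "real \<Rightarrow> nat \<Rightarrow> real" where
  "tolerance b t = (if t < settle_time b then b else tolerance (2 * b) (t - settle_time b))"
  by auto
termination
  by (relation "Wellfounded.measure snd") (auto simp: settle_time_def)

declare tolerance.simps [simp del]

lemma settle_time_le: "\<beta> (2 * b) t \<le> b \<Longrightarrow> settle_time b \<le> Suc t"
  unfolding settle_time_def by (simp add: Least_le)

lemma settle_time_spec:
  assumes "0 < b"
  shows "\<beta> (2 * b) (settle_time b) \<le> b"
proof -
  have "\<forall>\<^sub>F t in sequentially. \<beta> (2 * b) t < b"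
    using class_KL_tendsto_0[OF KL, of "2 * b"] assms by (intro order_tendstoD) auto
  then obtain t where "\<beta> (2 * b) t \<le> b"
    by (auto simp: eventually_sequentially intro: less_imp_le)
  then have "\<beta> (2 * b) (LEAST t. \<beta> (2 * b) t \<le> b) \<le> b"
    by (rule LeastI)
  moreover have "\<beta> (2 * b) (settle_time b) \<le> \<beta> (2 * b) (LEAST t. \<beta> (2 * b) t \<le> b)"
    using assms by (intro class_KL_antimono[OF KL]) (auto simp: settle_time_def)
  ultimately show ?thesis
    by linarith
qed

lemma settle_time_le_of_bound:
  assumes "\<beta> (2 * c) T \<le> b\<^sub>0" and "0 < b\<^sub>0" "b\<^sub>0 \<le> b" "b \<le> c"
  shows "settle_time b \<le> Suc T"
proof (rule settle_time_le)
  have "\<beta> (2 * b) T \<le> \<beta> (2 * c) T"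
    using assms by (intro class_KL_mono[OF KL]) auto
  then show "\<beta> (2 * b) T \<le> b"
    using assms by linarith
qed

lemma tolerance_below_settle_time: "t < settle_time b \<Longrightarrow> tolerance b t = b"
  by (simp add: tolerance.simps)

lemma tolerance_after_settle_time: "tolerance b (settle_time b + t) = tolerance (2 * b) t"
  by (simp add: tolerance.simps)

lemma tolerance_ge: "0 < b \<Longrightarrow> b \<le> tolerance b t"
proof (induction b t rule: tolerance.induct)
  case (1 b t)
  then show ?case
    by (subst tolerance.simps) (auto intro: order_trans[of b "2 * b"])
qed

lemma tolerance_mono: "0 < b \<Longrightarrow> t \<le> t' \<Longrightarrow> tolerance b t \<le> tolerance b t'"
proof (induction b t arbitrary: t' rule: tolerance.induct)
  case (1 b t)
  then show ?case
    using tolerance_ge[of b t'] tolerance_ge[of "2 * b" "t' - settle_time b"]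
    by (simp add: tolerance.simps[of b t] tolerance.simps[of b t'])
qed

lemma tolerance_ge_power:
  "0 < b \<Longrightarrow> (\<Sum>m<n. settle_time (2 ^ m * b)) \<le> t \<Longrightarrow> 2 ^ n * b \<le> tolerance b t"
proof (induction n arbitrary: b t)
  case 0
  then show ?case
    using tolerance_ge by simp
next
  case (Suc n)
  have "(\<Sum>m<Suc n. settle_time (2 ^ m * b)) = settle_time b + (\<Sum>m<n. settle_time (2 ^ m * (2 * b)))"
    by (subst sum.lessThan_Suc_shift) (simp add: mult.assoc mult.left_commute)
  then have "settle_time b \<le> t" and "(\<Sum>m<n. settle_time (2 ^ m * (2 * b))) \<le> t - settle_time b"
    using Suc.prems by auto
  then show ?case
    using Suc.IH[of "2 * b" "t - settle_time b"] Suc.prems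
    by (subst tolerance.simps) (simp add: mult.assoc mult.left_commute)
qed

text \<open>The tolerated input level eventually exceeds any bound, uniformly for targets
  bounded away from zero: only finitely many doublings are needed, and their settling
  times are uniformly bounded.\<close>
lemma eventually_tolerance_ge:
  assumes "0 < b\<^sub>0"
  shows "\<exists>T. \<forall>t\<ge>T. \<forall>b\<ge>b\<^sub>0. e \<le> tolerance b t"
proof -
  define E where "E = max e b\<^sub>0"
  obtain n where "E / b\<^sub>0 < 2 ^ n"
    using real_arch_pow[of 2 "E / b\<^sub>0"] by auto
  then have n: "E \<le> 2 ^ n * b\<^sub>0"
    using assms by (simp add: field_simps)
  have "e \<le> E"
    by (simp add: E_def)
  have "\<forall>\<^sub>F t in sequentially. \<beta> (2 * (2 ^ n * E)) t < b\<^sub>0"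
    using class_KL_tendsto_0[OF KL, of "2 * (2 ^ n * E)"] assms
    by (intro order_tendstoD) (auto simp: E_def)
  then obtain T where T: "\<beta> (2 * (2 ^ n * E)) T \<le> b\<^sub>0"
    by (auto simp: eventually_sequentially intro: less_imp_le)
  have "e \<le> tolerance b t" if "n * Suc T \<le> t" and "b\<^sub>0 \<le> b" for t b
  proof (cases "E \<le> b")
    case True
    then show ?thesis
      using tolerance_ge[of b t] assms that by (auto simp: E_def)
  next
    case False
    have "settle_time (2 ^ m * b) \<le> Suc T" if "m < n" for m
    proof (rule settle_time_le_of_bound[OF T assms])
      have "(2::real) ^ m \<le> 2 ^ n"
        using that by (intro power_increasing) auto
      then show "2 ^ m * b \<le> 2 ^ n * E"
        using False assms \<open>b\<^sub>0 \<le> b\<close> by (intro mult_mono) auto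
      show "b\<^sub>0 \<le> 2 ^ m * b"
        using assms \<open>b\<^sub>0 \<le> b\<close> mult_mono[of 1 "2 ^ m" b\<^sub>0 b] by simp
    qed
    then have "(\<Sum>m<n. settle_time (2 ^ m * b)) \<le> t"
      using sum_mono[of "{..<n}" "\<lambda>m. settle_time (2 ^ m * b)" "\<lambda>_. Suc T"] that by auto
    then have "2 ^ n * b \<le> tolerance b t"
      using assms that by (intro tolerance_ge_power) auto
    moreover have "2 ^ n * b\<^sub>0 \<le> 2 ^ n * b"
      using that by simp
    ultimately show ?thesis
      using n \<open>e \<le> E\<close> by linarith
  qed
  then show ?thesis
    by blast
qed

lemma le_by_tolerance:
  fixes s e :: "nat \<Rightarrow> real"
  assumes nonneg: "\<And>k. 0 \<le> s k" and "s 0 = 0"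
    and restart: "\<And>j k. s (j + k) \<le> max (\<beta> (s j) k) (running_max (\<lambda>i. e (j + i)) k)"
  shows "0 < b \<Longrightarrow> (\<And>i. i < k \<Longrightarrow> e i \<le> tolerance b (k - i - 1)) \<Longrightarrow> s k \<le> b"
proof (induction k arbitrary: b rule: less_induct)
  case (less k)
  show ?case
  proof (cases "k < settle_time b")
    case True
    then have "running_max e k \<le> b"
      using less.prems by (intro running_max_least) (auto simp: tolerance_below_settle_time)
    then show ?thesis
      using restart[of 0 k] \<open>s 0 = 0\<close> less.prems by (simp add: class_KL_zero[OF KL])
  next
    case False
    then obtain j where k: "k = j + settle_time b"
      by (metis add.commute le_add_diff_inverse not_less)
    have "s j \<le> 2 * b"
    proof (rule less.IH)
      show "j < k"
        by (simp add: k settle_time_def)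
      show "e i \<le> tolerance (2 * b) (j - i - 1)" if "i < j" for i
        using less.prems(2)[of i] that tolerance_after_settle_time[of b "j - i - 1"]
        by (simp add: k add.commute)
    qed (use less.prems in simp)
    then have "\<beta> (s j) (settle_time b) \<le> b"
      using class_KL_mono[OF KL nonneg] settle_time_spec[OF less.prems(1)] order_trans by blast
    moreover have "running_max (\<lambda>i. e (j + i)) (settle_time b) \<le> b"
    proof (rule running_max_least)
      show "e (j + i) \<le> b" if "i < settle_time b" for i
        using less.prems(2)[of "j + i"] that by (simp add: k tolerance_below_settle_time)
    qed (use less.prems in simp)
    ultimately show ?thesis
      using restart[of j "settle_time b"] by (simp add: k)
  qed
qed

definition fading_gain :: "real \<Rightarrow> nat \<Rightarrow> real" where
  "fading_gain e t = Sup (insert 0 {b. 0 < b \<and> tolerance b t < e})"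

lemma bdd_above_fading_gain: "bdd_above {b. 0 < b \<and> tolerance b t < e}"
  by (rule bdd_aboveI[of _ e]) (auto dest: tolerance_ge[of _ t])

lemma fading_gain_nonneg: "0 \<le> fading_gain e t"
  unfolding fading_gain_def by (rule cSup_upper) (auto simp: bdd_above_fading_gain)

lemma fading_gain_le: "0 \<le> e \<Longrightarrow> fading_gain e t \<le> e"
  unfolding fading_gain_def by (rule cSup_least) (auto dest: tolerance_ge[of _ t])

lemma le_tolerance_of_fading_gain: "0 < b \<Longrightarrow> fading_gain e t < b \<Longrightarrow> e \<le> tolerance b t"
  unfolding fading_gain_def
  by (metis (mono_tags, lifting) bdd_above_fading_gain bdd_above_insert cSup_upper insertCI
      mem_Collect_eq not_le)

lemma fading_gain_mono: "e \<le> e' \<Longrightarrow> fading_gain e t \<le> fading_gain e' t"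
  unfolding fading_gain_def
  by (rule cSup_subset_mono) (auto simp: bdd_above_fading_gain)

lemma fading_gain_antimono: "t \<le> t' \<Longrightarrow> fading_gain e t' \<le> fading_gain e t"
  unfolding fading_gain_def
  by (rule cSup_subset_mono) (auto simp: bdd_above_fading_gain dest: tolerance_mono)

lemma fading_gain_tendsto_0: "(\<lambda>t. fading_gain e t) \<longlonglongrightarrow> 0"
proof (rule order_tendstoI)
  fix y :: real
  assume "0 < y"
  then obtain T where T: "\<And>t b. T \<le> t \<Longrightarrow> y / 2 \<le> b \<Longrightarrow> e \<le> tolerance b t"
    using eventually_tolerance_ge[of "y / 2" e] by auto
  have "fading_gain e t \<le> y / 2" if "T \<le> t" for t
    unfolding fading_gain_def using \<open>0 < y\<close> T[OF that]
    by (intro cSup_least) (auto simp: not_less[symmetric])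
  then show "\<forall>\<^sub>F t in sequentially. fading_gain e t < y"
    using \<open>0 < y\<close> by (intro eventually_sequentiallyI[of T]) fastforce
qed (auto intro: always_eventually less_le_trans[OF _ fading_gain_nonneg])

lemma le_by_fading_gain:
  fixes s e :: "nat \<Rightarrow> real"
  assumes "\<And>k. 0 \<le> s k" and "s 0 = 0"
    and "\<And>j k. s (j + k) \<le> max (\<beta> (s j) k) (running_max (\<lambda>i. e (j + i)) k)"
  shows "s k \<le> running_max (\<lambda>i. fading_gain (e i) (k - i - 1)) k"
proof (rule dense_ge)
  fix b
  assume b: "running_max (\<lambda>i. fading_gain (e i) (k - i - 1)) k < b"
  then have "0 < b"
    using running_max_nonneg le_less_trans by blast
  then show "s k \<le> b"
    using b le_by_tolerance[OF assms] running_max_ge le_less_trans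
    by (metis le_tolerance_of_fading_gain)
qed

definition fading_majorant :: "real \<Rightarrow> nat \<Rightarrow> real" where
  "fading_majorant = KL_majorant fading_gain"

lemma fading_gain_le_fading_majorant: "0 \<le> e \<Longrightarrow> fading_gain e t \<le> fading_majorant e t"
  unfolding fading_majorant_def by (intro le_KL_majorant mono_onI fading_gain_mono)

lemma class_KL_fading_majorant: "class_KL fading_majorant"
  unfolding fading_majorant_def
proof (rule class_KL_KL_majorant[OF class_K_id])
  show "mono_on {0..} (\<lambda>e. fading_gain e t)" for t
    by (intro mono_onI fading_gain_mono)
  show "fading_gain e t' \<le> fading_gain e t" if "t \<le> t'" for e t t'
    using that by (rule fading_gain_antimono)
qed (auto intro: fading_gain_nonneg fading_gain_tendsto_0 fading_gain_le)

text \<open>Prepending a zero state reduces the general case to \<open>s 0 = 0\<close>: the initial state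
  enters as the fictitious input \<open>\<beta> (s 0) 0\<close>, which dominates \<open>\<beta> (s 0) k\<close> and \<open>s 0\<close>.\<close>
lemma restart_estimate_prepend_initial:
  fixes s e :: "nat \<Rightarrow> real"
  assumes nonneg: "\<And>k. 0 \<le> s k"
    and restart: "\<And>j k. s (j + k) \<le> max (\<beta> (s j) k) (running_max (\<lambda>i. e (j + i)) k)"
  defines "s' \<equiv> case_nat 0 s" and "e' \<equiv> case_nat (\<beta> (s 0) 0) e"
  shows "s' (j + k) \<le> max (\<beta> (s' j) k) (running_max (\<lambda>i. e' (j + i)) k)"
proof (cases j)
  case 0
  show ?thesis
  proof (cases k)
    case (Suc k')
    have "\<beta> (s 0) k' \<le> e' 0"
      using class_KL_antimono[OF KL nonneg] by (simp add: e'_def)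
    also have "\<dots> \<le> running_max e' k"
      by (rule running_max_ge) (simp add: Suc)
    finally have "\<beta> (s 0) k' \<le> running_max e' k" .
    moreover have "running_max e k' \<le> running_max e' k"
    proof (rule running_max_least[OF running_max_nonneg])
      show "e i \<le> running_max e' k" if "i < k'" for i
        using that running_max_ge[of "Suc i" k e'] by (simp add: Suc e'_def)
    qed
    ultimately have "s k' \<le> running_max e' k"
      using restart[of 0 k'] by simp
    then show ?thesis
      by (simp add: 0 Suc s'_def class_KL_zero[OF KL] le_max_iff_disj)
  qed (simp add: 0 s'_def running_max_nonneg le_max_iff_disj)
qed (simp add: s'_def e'_def restart)

lemma restart_estimate_imp_fading_bound:
  fixes s e :: "nat \<Rightarrow> real"
  assumes nonneg: "\<And>k. 0 \<le> s k" and e: "\<And>i. 0 \<le> e i"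
    and restart: "\<And>j k. s (j + k) \<le> max (\<beta> (s j) k) (running_max (\<lambda>i. e (j + i)) k)"
  shows "s k \<le> max (fading_majorant (\<beta> (s 0) 0) k)
    (running_max (\<lambda>i. fading_majorant (e i) (k - i - 1)) k)"
proof -
  let ?e' = "case_nat (\<beta> (s 0) 0) e"
  have "s k = case_nat 0 s (Suc k)"
    by simp
  also have "\<dots> \<le> running_max (\<lambda>i. fading_gain (?e' i) (Suc k - i - 1)) (Suc k)"
    using le_by_fading_gain[OF _ _ restart_estimate_prepend_initial[OF nonneg restart], of "Suc k"]
      nonneg
    by (simp split: nat.split)
  also have "\<dots> \<le> max (fading_majorant (\<beta> (s 0) 0) k)
      (running_max (\<lambda>i. fading_majorant (e i) (k - i - 1)) k)"
  proof (rule running_max_least)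
    fix i
    assume "i < Suc k"
    then show "fading_gain (?e' i) (Suc k - i - 1) \<le> max (fading_majorant (\<beta> (s 0) 0) k)
        (running_max (\<lambda>i. fading_majorant (e i) (k - i - 1)) k)"
    proof (cases i)
      case 0
      then show ?thesis
        using fading_gain_le_fading_majorant[OF class_KL_nonneg[OF KL nonneg]]
        by (simp add: max.coboundedI1)
    next
      case (Suc i')
      then have "fading_gain (?e' i) (Suc k - i - 1) \<le> fading_majorant (e i') (k - i' - 1)"
        using fading_gain_le_fading_majorant[OF e] by simp
      also have "\<dots> \<le> running_max (\<lambda>i. fading_majorant (e i) (k - i - 1)) k"
        using Suc \<open>i < Suc k\<close> by (intro running_max_ge) simp
      finally show ?thesis
        by (simp add: max.coboundedI2)
    qed
  qed (simp add: running_max_nonneg max.coboundedI2)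
  finally show ?thesis .
qed

end

lemma fading_max_le_seg_norm: "class_KL g \<Longrightarrow> fading_max g f k \<le> g (seg_norm f k) 0"
  unfolding fading_max_eq_running_max seg_norm_eq_running_max
  by (rule running_max_least[OF class_KL_nonneg[OF _ running_max_nonneg]])
     (auto intro: order_trans[OF class_KL_antimono class_KL_mono] running_max_ge)

lemma trajectory_shift:
  "trajectory F H XX UU WW VV YY x u w v y \<Longrightarrow>
   trajectory F H XX UU WW VV YY (\<lambda>i. x (j + i)) (\<lambda>i. u (j + i)) (\<lambda>i. w (j + i))
     (\<lambda>i. v (j + i)) (\<lambda>i. y (j + i))"
  unfolding trajectory_def by (metis add_Suc_right)

lemma fading_memory_imp_incremental_iss:
  fixes P :: "(nat \<Rightarrow> 'x::real_normed_vector) \<Rightarrow> (nat \<Rightarrow> 'u) \<Rightarrow> (nat \<Rightarrow> 'w) \<Rightarrow>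
    (nat \<Rightarrow> 'v::real_normed_vector) \<Rightarrow> (nat \<Rightarrow> 'y::real_normed_vector) \<Rightarrow> bool"
  assumes "class_KL g0" "class_KL gv" "class_KL gy"
    and fading: "\<forall>x u w v y x' w' v' y' k. P x u w v y \<longrightarrow> P x' u w' v' y' \<longrightarrow>
      norm (x k - x' k) \<le> max (fading_max gv (\<lambda>i. v i - v' i) k)
        (max (g0 (norm (x 0 - x' 0)) k) (fading_max gy (\<lambda>i. y i - y' i) k))"
  shows "\<exists>\<gamma>0 \<gamma>v \<gamma>y. class_KL \<gamma>0 \<and> class_K \<gamma>v \<and> class_K \<gamma>y \<and>
    (\<forall>x u w v y x' w' v' y' k. P x u w v y \<longrightarrow> P x' u w' v' y' \<longrightarrow>
      norm (x k - x' k) \<le> max (\<gamma>0 (norm (x 0 - x' 0)) k)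
        (max (\<gamma>v (seg_norm (\<lambda>i. v i - v' i) k)) (\<gamma>y (seg_norm (\<lambda>i. y i - y' i) k))))"
proof (intro exI conjI allI impI)
  show "class_KL g0" "class_K (\<lambda>r. gv r 0)" "class_K (\<lambda>r. gy r 0)"
    using assms by (auto intro: class_KL_K)
  fix x u w v y x' w' v' y' k
  assume "P x u w v y" "P x' u w' v' y'"
  then show "norm (x k - x' k) \<le> max (g0 (norm (x 0 - x' 0)) k)
      (max (gv (seg_norm (\<lambda>i. v i - v' i) k) 0) (gy (seg_norm (\<lambda>i. y i - y' i) k) 0))"
    using fading[rule_format, of x u w v y x' w' v' y' k]
      fading_max_le_seg_norm[OF \<open>class_KL gv\<close>, of "\<lambda>i. v i - v' i" k]
      fading_max_le_seg_norm[OF \<open>class_KL gy\<close>, of "\<lambda>i. y i - y' i" k]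
    by (simp add: le_max_iff_disj) linarith
qed

lemma incremental_iss_imp_fading_memory:
  fixes P :: "(nat \<Rightarrow> 'x::real_normed_vector) \<Rightarrow> (nat \<Rightarrow> 'u) \<Rightarrow> (nat \<Rightarrow> 'w) \<Rightarrow>
    (nat \<Rightarrow> 'v::real_normed_vector) \<Rightarrow> (nat \<Rightarrow> 'y::real_normed_vector) \<Rightarrow> bool"
  assumes shift: "\<And>x u w v y j. P x u w v y \<Longrightarrow>
      P (\<lambda>i. x (j + i)) (\<lambda>i. u (j + i)) (\<lambda>i. w (j + i)) (\<lambda>i. v (j + i)) (\<lambda>i. y (j + i))"
    and \<gamma>0: "class_KL \<gamma>0" and \<gamma>v: "class_K \<gamma>v" and \<gamma>y: "class_K \<gamma>y"
    and iss: "\<forall>x u w v y x' w' v' y' k. P x u w v y \<longrightarrow> P x' u w' v' y' \<longrightarrow>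
      norm (x k - x' k) \<le> max (\<gamma>0 (norm (x 0 - x' 0)) k)
        (max (\<gamma>v (seg_norm (\<lambda>i. v i - v' i) k)) (\<gamma>y (seg_norm (\<lambda>i. y i - y' i) k)))"
  shows "\<exists>g0 gv gy. class_KL g0 \<and> class_KL gv \<and> class_KL gy \<and>
    (\<forall>x u w v y x' w' v' y' k. P x u w v y \<longrightarrow> P x' u w' v' y' \<longrightarrow>
      norm (x k - x' k) \<le> max (fading_max gv (\<lambda>i. v i - v' i) k)
        (max (g0 (norm (x 0 - x' 0)) k) (fading_max gy (\<lambda>i. y i - y' i) k)))"
proof -
  define \<sigma> where "\<sigma> = fading_majorant \<gamma>0"
  have \<sigma>: "class_KL \<sigma>"
    unfolding \<sigma>_def by (rule class_KL_fading_majorant[OF \<gamma>0])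
  show ?thesis
  proof (intro exI conjI allI impI)
    show "class_KL (\<lambda>r. \<sigma> (\<gamma>0 r 0))" "class_KL (\<lambda>r. \<sigma> (\<gamma>v r))" "class_KL (\<lambda>r. \<sigma> (\<gamma>y r))"
      using \<sigma> \<gamma>0 \<gamma>v \<gamma>y by (auto intro: class_KL_compose_K class_KL_K)
    fix x u w v y x' w' v' y' k
    assume P: "P x u w v y" "P x' u w' v' y'"
    define s where "s k = norm (x k - x' k)" for k
    define e where "e i = max (\<gamma>v (norm (v i - v' i))) (\<gamma>y (norm (y i - y' i)))" for i
    have e_nonneg: "0 \<le> e i" for i
      using class_K_nonneg[OF \<gamma>v] by (simp add: e_def le_max_iff_disj)
    have restart: "s (j + k) \<le> max (\<gamma>0 (s j) k) (running_max (\<lambda>i. e (j + i)) k)" for j k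
    proof -
      have "\<gamma>v (seg_norm (\<lambda>i. v (j + i) - v' (j + i)) k) \<le> running_max (\<lambda>i. e (j + i)) k"
        by (rule class_K_seg_norm_le[OF \<gamma>v]) (simp add: e_def)
      moreover have "\<gamma>y (seg_norm (\<lambda>i. y (j + i) - y' (j + i)) k) \<le> running_max (\<lambda>i. e (j + i)) k"
        by (rule class_K_seg_norm_le[OF \<gamma>y]) (simp add: e_def)
      ultimately show ?thesis
        using iss[rule_format, OF shift[OF P(1), of j] shift[OF P(2), of j], of k]
        by (simp add: s_def le_max_iff_disj) linarith
    qed
    have "s k \<le> max (\<sigma> (\<gamma>0 (s 0) 0) k) (running_max (\<lambda>i. \<sigma> (e i) (k - i - 1)) k)"
      unfolding \<sigma>_def
      by (rule restart_estimate_imp_fading_bound[OF \<gamma>0 _ e_nonneg restart]) (simp add: s_def)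
    moreover have "running_max (\<lambda>i. \<sigma> (e i) (k - i - 1)) k
        \<le> max (fading_max (\<lambda>r. \<sigma> (\<gamma>v r)) (\<lambda>i. v i - v' i) k)
            (fading_max (\<lambda>r. \<sigma> (\<gamma>y r)) (\<lambda>i. y i - y' i) k)"
      unfolding e_def fading_max_eq_running_max
      using class_K_nonneg[OF \<gamma>v] class_K_nonneg[OF \<gamma>y]
      by (simp add: class_KL_max[OF \<sigma>] running_max_max_le)
    ultimately show "norm (x k - x' k) \<le> max (fading_max (\<lambda>r. \<sigma> (\<gamma>v r)) (\<lambda>i. v i - v' i) k)
        (max (\<sigma> (\<gamma>0 (norm (x 0 - x' 0)) 0) k) (fading_max (\<lambda>r. \<sigma> (\<gamma>y r)) (\<lambda>i. y i - y' i) k))"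
      by (auto simp: s_def le_max_iff_disj)
  qed
qed

theorem proposition2:
  fixes F :: "'x::real_normed_vector \<Rightarrow> 'u \<Rightarrow> 'w \<Rightarrow> 'v::real_normed_vector \<Rightarrow> 'x"
    and H :: "'x \<Rightarrow> 'u \<Rightarrow> 'w \<Rightarrow> 'v \<Rightarrow> 'y::real_normed_vector"
    and XX :: "'x set" and UU :: "'u set" and WW :: "'w set" and VV :: "'v set" and YY :: "'y set"
  shows "(\<exists>\<gamma>0 \<gamma>v \<gamma>y. class_KL \<gamma>0 \<and> class_K \<gamma>v \<and> class_K \<gamma>y \<and>
            (\<forall>x u w v y x' w' v' y' k.
               trajectory F H XX UU WW VV YY x u w v y \<longrightarrow>
               trajectory F H XX UU WW VV YY x' u w' v' y' \<longrightarrow>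
               norm (x k - x' k) \<le> max (\<gamma>0 (norm (x 0 - x' 0)) k)
                 (max (\<gamma>v (seg_norm (\<lambda>i. v i - v' i) k)) (\<gamma>y (seg_norm (\<lambda>i. y i - y' i) k)))))
     \<longleftrightarrow>
         (\<exists>g0 gv gy. class_KL g0 \<and> class_KL gv \<and> class_KL gy \<and>
            (\<forall>x u w v y x' w' v' y' k.
               trajectory F H XX UU WW VV YY x u w v y \<longrightarrow>
               trajectory F H XX UU WW VV YY x' u w' v' y' \<longrightarrow>
               norm (x k - x' k) \<le> max (fading_max gv (\<lambda>i. v i - v' i) k)
                 (max (g0 (norm (x 0 - x' 0)) k) (fading_max gy (\<lambda>i. y i - y' i) k))))"
  using incremental_iss_imp_fading_memory[where P = "trajectory F H XX UU WW VV YY",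
      OF trajectory_shift]
    fading_memory_imp_incremental_iss[where P = "trajectory F H XX UU WW VV YY"]
  by (intro iffI; elim exE conjE) assumption+

end
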